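(* Suppose that for every $i\in\mathcal N$ and every $Z\in\mathcal X$, the function $c\mapsto U_i(Z+c)$ on $\mathbb R$ is continuous, strictly increasing, and satisfies $\lim_{c\to\infty}U_i(Z+c)=\infty$, and that each $U_i$ is monotone and concave. Then $\mathcal{CPO}=\bigcup_{\lambda\in\Lambda}\mathcal{CS}_\lambda$.
   Context: Let $(\Omega,\mathcal F,\mathbb P)$ be an atomless probability space and $\mathcal X:=L^\infty(\Omega,\mathcal F,\mathbb P)$. There are $n\in\mathbb N$ agents indexed by $\mathcal N=\{1,\dots,n\}$ (with $n\ge 2$), agent $i$ having initial endowment $X_i\in\mathcal X$; the aggregate endowment is $S:=\sum_{i=1}^n X_i$. The set of allocations is $\mathcal A:=\{(Y_1,\dots,Y_n)\in\mathcal X^n:\sum_{i=1}^nY_i=S\}$. Each agent $i$ has a utility functional $U_i:\mathcal X\to\mathbb R$. An allocation $(Y_i)\in\mathcal A$ is individually rational (IR) if $U_i(Y_i)\ge U_i(X_i)$ for all $i$; $\mathcal{IR}$ denotes the set of IR allocations. A random vector $(Z_1,\dots,Z_n)$ is comonotone if $(Z_i(\omega_1)-Z_i(\omega_2))(Z_j(\omega_1)-Z_j(\omega_2))\ge0$ for all $\omega_1,\omega_2\in\Omega$ and all $i,j$. $\mathcal A_C$ denotes the set of comonotone allocations in $\mathcal A$. An allocation $(Y_i^* )\in\mathcal A_C$ is comonotone Pareto optimal (CPO) if it is IR and there is no other IR allocation $(Y_i)\in\mathcal A_C$ with $U_i(Y_i)\ge U_i(Y_i^* )$ for all $i$ and at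 least one strict inequality; $\mathcal{CPO}$ denotes the set of CPO allocations. $U$ is monotone if $Z_1\le Z_2$ implies $U(Z_1)\le U(Z_2)$. Let $\Lambda:=\mathbb R_+^n\setminus\{0\}$, and for $\lambda\in\Lambda$ let $\mathcal{CS}_\lambda$ be the set of maximizers (possibly empty) of $\sup_{(Y_i)\in\mathcal{IR}\cap\mathcal A_C}\sum_{i=1}^n\lambda_iU_i(Y_i)$. *)

theory Defs
  imports "HOL-Probability.Probability"
begin

definition atomless :: "'a measure \<Rightarrow> bool" where
  "atomless M \<longleftrightarrow> (\<forall>A\<in>sets M. measure M A > 0 \<longrightarrow>
      (\<exists>B\<in>sets M. B \<subseteq> A \<and> 0 < measure M B \<and> measure M B < measure M A))"

text \<open>Bounded random variables; representatives normalised to 0 off the sample space.\<close>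
definition Lspace :: "'a measure \<Rightarrow> ('a \<Rightarrow> real) set" where
  "Lspace M = {Z. Z \<in> borel_measurable M \<and> bounded (Z ` space M) \<and> (\<forall>\<omega>. \<omega> \<notin> space M \<longrightarrow> Z \<omega> = 0)}"

definition shift :: "'a measure \<Rightarrow> ('a \<Rightarrow> real) \<Rightarrow> real \<Rightarrow> ('a \<Rightarrow> real)" where
  "shift M Z c = (\<lambda>\<omega>. if \<omega> \<in> space M then Z \<omega> + c else 0)"

definition aggregate :: "nat \<Rightarrow> (nat \<Rightarrow> 'a \<Rightarrow> real) \<Rightarrow> 'a \<Rightarrow> real" where
  "aggregate n X = (\<lambda>\<omega>. \<Sum>i=1..n. X i \<omega>)"

definition allocations :: "'a measure \<Rightarrow> nat \<Rightarrow> (nat \<Rightarrow> 'a \<Rightarrow> real) \<Rightarrow> (nat \<Rightarrow> 'a \<Rightarrow> real) set" where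
  "allocations M n X = {Y \<in> {1..n} \<rightarrow>\<^sub>E Lspace M. aggregate n Y = aggregate n X}"

definition IR :: "'a measure \<Rightarrow> nat \<Rightarrow> (nat \<Rightarrow> ('a \<Rightarrow> real) \<Rightarrow> real) \<Rightarrow> (nat \<Rightarrow> 'a \<Rightarrow> real)
    \<Rightarrow> (nat \<Rightarrow> 'a \<Rightarrow> real) set" where
  "IR M n U X = {Y \<in> allocations M n X. \<forall>i\<in>{1..n}. U i (Y i) \<ge> U i (X i)}"

definition comonotone :: "'a measure \<Rightarrow> nat \<Rightarrow> (nat \<Rightarrow> 'a \<Rightarrow> real) \<Rightarrow> bool" where
  "comonotone M n Y \<longleftrightarrow> (\<forall>i\<in>{1..n}. \<forall>j\<in>{1..n}. \<forall>\<omega>1\<in>space M. \<forall>\<omega>2\<in>space M.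
      (Y i \<omega>1 - Y i \<omega>2) * (Y j \<omega>1 - Y j \<omega>2) \<ge> 0)"

definition comon_allocations :: "'a measure \<Rightarrow> nat \<Rightarrow> (nat \<Rightarrow> 'a \<Rightarrow> real) \<Rightarrow> (nat \<Rightarrow> 'a \<Rightarrow> real) set" where
  "comon_allocations M n X = {Y \<in> allocations M n X. comonotone M n Y}"

definition CPO :: "'a measure \<Rightarrow> nat \<Rightarrow> (nat \<Rightarrow> ('a \<Rightarrow> real) \<Rightarrow> real) \<Rightarrow> (nat \<Rightarrow> 'a \<Rightarrow> real)
    \<Rightarrow> (nat \<Rightarrow> 'a \<Rightarrow> real) set" where
  "CPO M n U X = {Ys \<in> comon_allocations M n X. Ys \<in> IR M n U X \<and>
      \<not> (\<exists>Y \<in> IR M n U X \<inter> comon_allocations M n X.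
            (\<forall>i\<in>{1..n}. U i (Y i) \<ge> U i (Ys i)) \<and> (\<exists>i\<in>{1..n}. U i (Y i) > U i (Ys i)))}"

definition Lambda :: "nat \<Rightarrow> (nat \<Rightarrow> real) set" where
  "Lambda n = {l \<in> {1..n} \<rightarrow>\<^sub>E {0..}. \<exists>i\<in>{1..n}. l i \<noteq> 0}"

definition CS :: "'a measure \<Rightarrow> nat \<Rightarrow> (nat \<Rightarrow> ('a \<Rightarrow> real) \<Rightarrow> real) \<Rightarrow> (nat \<Rightarrow> 'a \<Rightarrow> real)
    \<Rightarrow> (nat \<Rightarrow> real) \<Rightarrow> (nat \<Rightarrow> 'a \<Rightarrow> real) set" where
  "CS M n U X l = {Ys \<in> IR M n U X \<inter> comon_allocations M n X.
      \<forall>Y \<in> IR M n U X \<inter> comon_allocations M n X.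
         (\<Sum>i=1..n. l i * U i (Y i)) \<le> (\<Sum>i=1..n. l i * U i (Ys i))}"

definition concave_fun :: "'a measure \<Rightarrow> (('a \<Rightarrow> real) \<Rightarrow> real) \<Rightarrow> bool" where
  "concave_fun M V \<longleftrightarrow> (\<forall>Z1\<in>Lspace M. \<forall>Z2\<in>Lspace M. \<forall>t::real. 0 \<le> t \<longrightarrow> t \<le> 1 \<longrightarrow>
      V (\<lambda>\<omega>. t * Z1 \<omega> + (1 - t) * Z2 \<omega>) \<ge> t * V Z1 + (1 - t) * V Z2)"

definition monotone_fun :: "'a measure \<Rightarrow> (('a \<Rightarrow> real) \<Rightarrow> real) \<Rightarrow> bool" where
  "monotone_fun M V \<longleftrightarrow> (\<forall>Z1\<in>Lspace M. \<forall>Z2\<in>Lspace M.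
      (\<forall>\<omega>\<in>space M. Z1 \<omega> \<le> Z2 \<omega>) \<longrightarrow> V Z1 \<le> V Z2)"

text \<open>A functional on L-infinity: it does not distinguish a.s. equal representatives.\<close>
definition ae_invariant :: "'a measure \<Rightarrow> (('a \<Rightarrow> real) \<Rightarrow> real) \<Rightarrow> bool" where
  "ae_invariant M V \<longleftrightarrow> (\<forall>Z1\<in>Lspace M. \<forall>Z2\<in>Lspace M.
      (AE \<omega> in M. Z1 \<omega> = Z2 \<omega>) \<longrightarrow> V Z1 = V Z2)"

end

theory Submission
  imports Defs
begin

text \<open>
  A weighted maximiser is comonotone Pareto optimal: a Pareto improvement that helps only agents
  of weight zero can be passed on, by a small cash transfer that keeps the allocation comonotone,
  to an agent of positive weight; continuity and strict monotonicity in cash make this possible.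
  Conversely, by concavity the mixture of two feasible comonotone allocations is again feasible
  and comonotone (they all move with the aggregate), so the set of attainable utility vectors is
  convex up to free disposal. A Pareto optimum is therefore not strictly dominated by a convex
  set, and a separating hyperplane with nonnegative normal supplies the weights; in finitely many
  coordinates it is built by induction from the planar separation theorem.
\<close>

lemma nonneg_if_linear_bounded_below:
  fixes b c d :: real
  assumes "\<And>s. 0 < s \<Longrightarrow> c \<le> b * s + d"
  shows "0 \<le> b"
proof (rule ccontr)
  assume "\<not> 0 \<le> b"
  define s where "s = (\<bar>c\<bar> + \<bar>d\<bar> + 1) / - b"
  have "0 < s" "b * s = - (\<bar>c\<bar> + \<bar>d\<bar> + 1)"
    using \<open>\<not> 0 \<le> b\<close> unfolding s_def by (auto simp: field_simps)
  then show False using assms[of s] by linarith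
qed

lemma planar_separation:
  fixes T :: "(real \<times> real) set"
  assumes disposal: "\<And>p q t. p \<in> T \<Longrightarrow> q \<in> T \<Longrightarrow> 0 \<le> t \<Longrightarrow> t \<le> 1 \<Longrightarrow>
      \<exists>r\<in>T. t *\<^sub>R p + (1 - t) *\<^sub>R q \<le> r"
    and no_positive: "\<And>r. r \<in> T \<Longrightarrow> \<not> (0 < fst r \<and> 0 < snd r)"
  shows "\<exists>a. 0 \<le> a \<and> fst a + snd a = 1 \<and> (\<forall>r\<in>T. a \<bullet> r \<le> 0)"
proof (cases "T = {}")
  case True
  then show ?thesis by (intro exI[of _ "(1, 0)"]) (auto simp: less_eq_prod_def)
next
  case False
  then obtain r0 where r0: "r0 \<in> T" by blast
  define Q where "Q = {x :: real \<times> real. 0 < fst x \<and> 0 < snd x}"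
  \<comment> \<open>\<open>S\<close> is convex although \<open>T\<close> need not be: the slack left by free disposal is absorbed into \<open>Q\<close>.\<close>
  define S where "S = {x - r |x r. x \<in> Q \<and> r \<in> T}"
  have "convex S"
    unfolding convex_def
  proof (intro ballI allI impI)
    fix y z and u v :: real assume "y \<in> S" "z \<in> S" "0 \<le> u" "0 \<le> v" "u + v = 1"
    then obtain x1 r1 x2 r2 where "x1 \<in> Q" "r1 \<in> T" "y = x1 - r1" "x2 \<in> Q" "r2 \<in> T" "z = x2 - r2"
      unfolding S_def by blast
    moreover obtain r where "r \<in> T" "u *\<^sub>R r1 + v *\<^sub>R r2 \<le> r"
      using disposal[OF \<open>r1 \<in> T\<close> \<open>r2 \<in> T\<close>, of u] \<open>0 \<le> u\<close> \<open>0 \<le> v\<close> \<open>u + v = 1\<close>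
      by (auto simp: eq_diff_eq[symmetric])
    moreover have "u *\<^sub>R x1 + v *\<^sub>R x2 + (r - (u *\<^sub>R r1 + v *\<^sub>R r2)) \<in> Q"
      using \<open>x1 \<in> Q\<close> \<open>x2 \<in> Q\<close> \<open>0 \<le> u\<close> \<open>0 \<le> v\<close> \<open>u + v = 1\<close>
        \<open>u *\<^sub>R r1 + v *\<^sub>R r2 \<le> r\<close>
      unfolding Q_def less_eq_prod_def
      by simp (smt (verit) mult_nonneg_nonneg mult_pos_pos)
    moreover have "u *\<^sub>R y + v *\<^sub>R z = (u *\<^sub>R x1 + v *\<^sub>R x2 + (r - (u *\<^sub>R r1 + v *\<^sub>R r2))) - r"
      unfolding \<open>y = x1 - r1\<close> \<open>z = x2 - r2\<close> by (simp add: algebra_simps)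
    ultimately show "u *\<^sub>R y + v *\<^sub>R z \<in> S"
      unfolding S_def by blast
  qed
  moreover have "0 \<notin> S"
  proof
    assume "0 \<in> S"
    then obtain x r where "0 = x - r" "x \<in> Q" "r \<in> T" unfolding S_def by blast
    then show False using no_positive[of x] unfolding Q_def by simp
  qed
  ultimately obtain a where "a \<noteq> 0" and a: "\<forall>s\<in>S. 0 \<le> a \<bullet> s"
    by (blast dest: separating_hyperplane_set_0)
  have sep: "a \<bullet> r \<le> a \<bullet> x" if "x \<in> Q" "r \<in> T" for x r
  proof -
    have "x - r \<in> S" using that unfolding S_def by blast
    then show ?thesis using a by (auto simp: inner_diff_right)
  qed
  obtain a1 a2 where a12: "a = (a1, a2)" by (cases a)
  have "0 \<le> a1"
  proof (rule nonneg_if_linear_bounded_below)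
    fix s :: real assume "0 < s"
    then show "a \<bullet> r0 \<le> a1 * s + a2"
      using sep[of "(s, 1)" r0] r0 unfolding Q_def a12 by simp
  qed
  moreover have "0 \<le> a2"
  proof (rule nonneg_if_linear_bounded_below)
    fix s :: real assume "0 < s"
    then show "a \<bullet> r0 \<le> a2 * s + a1"
      using sep[of "(1, s)" r0] r0 unfolding Q_def a12 by (simp add: mult.commute)
  qed
  ultimately have "0 < a1 + a2"
    using \<open>a \<noteq> 0\<close> a12 by (auto simp: zero_prod_def)
  have a_nonpos: "a \<bullet> r \<le> 0" if "r \<in> T" for r
  proof (rule field_le_epsilon)
    fix e :: real assume "0 < e"
    define x where "x = e / (a1 + a2)"
    have "0 < x" using \<open>0 < e\<close> \<open>0 < a1 + a2\<close> unfolding x_def by simp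
    then have "a \<bullet> r \<le> a1 * x + a2 * x"
      using sep[of "(x, x)" r] \<open>r \<in> T\<close> unfolding Q_def a12 by simp
    also have "\<dots> = (a1 + a2) * x" by (simp add: distrib_right)
    also have "\<dots> = e" using \<open>0 < a1 + a2\<close> unfolding x_def by simp
    finally show "a \<bullet> r \<le> 0 + e" by simp
  qed
  define b where "b = a /\<^sub>R (a1 + a2)"
  have "0 \<le> b" "fst b + snd b = 1"
    using \<open>0 \<le> a1\<close> \<open>0 \<le> a2\<close> \<open>0 < a1 + a2\<close>
    unfolding b_def a12 by (simp_all add: less_eq_prod_def distrib_left[symmetric])
  moreover have "b \<bullet> r \<le> 0" if "r \<in> T" for r
    using a_nonpos[OF that] \<open>0 < a1 + a2\<close> unfolding b_def
    by (simp add: mult_nonneg_nonpos)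
  ultimately show ?thesis by blast
qed

definition convex_upto_disposal :: "'i set \<Rightarrow> ('i \<Rightarrow> real) set \<Rightarrow> bool" where
  "convex_upto_disposal I K \<longleftrightarrow> (\<forall>k1\<in>K. \<forall>k2\<in>K. \<forall>t. 0 \<le> t \<longrightarrow> t \<le> 1 \<longrightarrow>
      (\<exists>k\<in>K. \<forall>i\<in>I. t * k1 i + (1 - t) * k2 i \<le> k i))"

lemma convex_upto_disposalD:
  assumes "convex_upto_disposal I K" "k1 \<in> K" "k2 \<in> K" "0 \<le> t" "t \<le> 1"
  obtains k where "k \<in> K" "\<And>i. i \<in> I \<Longrightarrow> t * k1 i + (1 - t) * k2 i \<le> k i"
  using assms unfolding convex_upto_disposal_def by blast

lemma convex_upto_disposal_positive_slice:
  assumes "convex_upto_disposal (insert j I) K"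
  shows "convex_upto_disposal I {k \<in> K. 0 < k j}"
  unfolding convex_upto_disposal_def
proof (intro ballI allI impI)
  fix k1 k2 and t :: real
  assume k12: "k1 \<in> {k \<in> K. 0 < k j}" "k2 \<in> {k \<in> K. 0 < k j}" and t: "0 \<le> t" "t \<le> 1"
  then obtain k where k: "k \<in> K" "\<And>i. i \<in> insert j I \<Longrightarrow> t * k1 i + (1 - t) * k2 i \<le> k i"
    using convex_upto_disposalD[OF assms] by blast
  have "0 < t * k1 j + (1 - t) * k2 j"
    using k12 t by (cases "t = 0") (auto intro: add_pos_nonneg)
  then have "k \<in> {k \<in> K. 0 < k j}" using k by force
  then show "\<exists>k\<in>{k \<in> K. 0 < k j}. \<forall>i\<in>I. t * k1 i + (1 - t) * k2 i \<le> k i"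
    using k(2) by blast
qed

lemma convex_upto_disposal_separation:
  assumes "finite I" "I \<noteq> {}" "convex_upto_disposal I K" "\<forall>k\<in>K. \<exists>i\<in>I. k i \<le> 0"
  shows "\<exists>l. (\<forall>i\<in>I. 0 \<le> l i) \<and> sum l I = 1 \<and> (\<forall>k\<in>K. (\<Sum>i\<in>I. l i * k i) \<le> 0)"
  using assms
proof (induction I arbitrary: K rule: finite_ne_induct)
  case (singleton j)
  then show ?case by (intro exI[of _ "\<lambda>_. 1"]) auto
next
  case (insert j I K)
  \<comment> \<open>Weights for the slice where coordinate \<open>j\<close> is positive, then a planar separation
    of the pair (weighted sum over \<open>I\<close>, coordinate \<open>j\<close>).\<close>
  obtain m where m: "\<forall>i\<in>I. 0 \<le> m i" "sum m I = 1"
    and m_sep: "\<forall>k\<in>{k \<in> K. 0 < k j}. (\<Sum>i\<in>I. m i * k i) \<le> 0"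
    using insert.IH[OF convex_upto_disposal_positive_slice[OF insert.prems(1)]] insert.prems(2)
    by force
  define T where "T = (\<lambda>k. (\<Sum>i\<in>I. m i * k i, k j)) ` K"
  have "\<exists>a. 0 \<le> a \<and> fst a + snd a = 1 \<and> (\<forall>r\<in>T. a \<bullet> r \<le> 0)"
  proof (rule planar_separation)
    fix p q and t :: real assume "p \<in> T" "q \<in> T" "0 \<le> t" "t \<le> 1"
    then obtain k1 k2 where "k1 \<in> K" "k2 \<in> K"
      and p: "p = (\<Sum>i\<in>I. m i * k1 i, k1 j)" and q: "q = (\<Sum>i\<in>I. m i * k2 i, k2 j)"
      unfolding T_def by blast
    then obtain k where "k \<in> K" and k: "\<And>i. i \<in> insert j I \<Longrightarrow> t * k1 i + (1 - t) * k2 i \<le> k i"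
      using convex_upto_disposalD[OF insert.prems(1)] \<open>0 \<le> t\<close> \<open>t \<le> 1\<close> by metis
    have "t * (\<Sum>i\<in>I. m i * k1 i) + (1 - t) * (\<Sum>i\<in>I. m i * k2 i)
        = (\<Sum>i\<in>I. m i * (t * k1 i + (1 - t) * k2 i))"
      by (simp add: sum_distrib_left sum.distrib[symmetric] algebra_simps)
    also have "\<dots> \<le> (\<Sum>i\<in>I. m i * k i)"
      using k m(1) by (intro sum_mono mult_left_mono) auto
    finally have "t *\<^sub>R p + (1 - t) *\<^sub>R q \<le> (\<Sum>i\<in>I. m i * k i, k j)"
      using k[of j] unfolding p q by (simp add: less_eq_prod_def)
    then show "\<exists>r\<in>T. t *\<^sub>R p + (1 - t) *\<^sub>R q \<le> r"
      using \<open>k \<in> K\<close> unfolding T_def by blast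
  next
    fix r assume "r \<in> T"
    then show "\<not> (0 < fst r \<and> 0 < snd r)"
      using m_sep unfolding T_def by force
  qed
  then obtain \<alpha> \<beta> where ab: "0 \<le> \<alpha>" "0 \<le> \<beta>" "\<alpha> + \<beta> = 1"
    and ab_sep: "\<forall>k\<in>K. \<alpha> * (\<Sum>i\<in>I. m i * k i) + \<beta> * k j \<le> 0"
    unfolding T_def by (force simp: less_eq_prod_def)
  define l where "l = (\<lambda>i. if i = j then \<beta> else \<alpha> * m i)"
  have l_I: "(\<Sum>i\<in>I. l i * k i) = \<alpha> * (\<Sum>i\<in>I. m i * k i)" for k :: "_ \<Rightarrow> real"
    unfolding l_def using \<open>j \<notin> I\<close> by (auto simp: sum_distrib_left algebra_simps intro!: sum.cong)
  show ?case
  proof (intro exI[of _ l] conjI ballI)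
    show "0 \<le> l i" if "i \<in> insert j I" for i
      using ab m(1) that unfolding l_def by auto
    show "sum l (insert j I) = 1"
      using l_I[of "\<lambda>_. 1"] m(2) ab(3) insert.hyps unfolding l_def by simp
    show "(\<Sum>i\<in>insert j I. l i * k i) \<le> 0" if "k \<in> K" for k
      using l_I[of k] ab_sep that insert.hyps unfolding l_def by (simp add: add.commute)
  qed
qed

lemma convex_upto_disposal_supporting_weights:
  assumes "finite I" "I \<noteq> {}" "convex_upto_disposal I K" "\<forall>k\<in>K. \<exists>i\<in>I. k i \<le> u i"
  shows "\<exists>l. (\<forall>i\<in>I. 0 \<le> l i) \<and> sum l I = 1 \<and>
    (\<forall>k\<in>K. (\<Sum>i\<in>I. l i * k i) \<le> (\<Sum>i\<in>I. l i * u i))"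
proof -
  have "convex_upto_disposal I ((\<lambda>k i. k i - u i) ` K)"
    unfolding convex_upto_disposal_def
  proof (intro ballI allI impI)
    fix d1 d2 and t :: real
    assume "d1 \<in> (\<lambda>k i. k i - u i) ` K" "d2 \<in> (\<lambda>k i. k i - u i) ` K" "0 \<le> t" "t \<le> 1"
    then obtain k1 k2 where "k1 \<in> K" "k2 \<in> K" "d1 = (\<lambda>i. k1 i - u i)" "d2 = (\<lambda>i. k2 i - u i)"
      by blast
    moreover obtain k where "k \<in> K" "\<And>i. i \<in> I \<Longrightarrow> t * k1 i + (1 - t) * k2 i \<le> k i"
      using convex_upto_disposalD[OF assms(3) \<open>k1 \<in> K\<close> \<open>k2 \<in> K\<close> \<open>0 \<le> t\<close> \<open>t \<le> 1\<close>] by blast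
    ultimately show "\<exists>d\<in>(\<lambda>k i. k i - u i) ` K. \<forall>i\<in>I. t * d1 i + (1 - t) * d2 i \<le> d i"
      by (intro bexI[of _ "\<lambda>i. k i - u i"] ballI imageI) (auto simp: algebra_simps)
  qed
  moreover have "\<forall>d\<in>(\<lambda>k i. k i - u i) ` K. \<exists>i\<in>I. d i \<le> 0"
    using assms(4) by auto
  ultimately obtain l where "\<forall>i\<in>I. 0 \<le> l i" "sum l I = 1"
    and "\<forall>k\<in>K. (\<Sum>i\<in>I. l i * (k i - u i)) \<le> 0"
    using convex_upto_disposal_separation[OF assms(1,2)] by force
  then show ?thesis
    by (intro exI[of _ l]) (simp add: right_diff_distrib sum_subtractf)
qed

lemma Lspace_convex_comb:
  assumes "Z1 \<in> Lspace M" "Z2 \<in> Lspace M"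
  shows "(\<lambda>\<omega>. t * Z1 \<omega> + (1 - t) * Z2 \<omega>) \<in> Lspace M"
proof -
  have "bounded ((\<lambda>\<omega>. t *\<^sub>R Z1 \<omega> + (1 - t) *\<^sub>R Z2 \<omega>) ` space M)"
    using assms unfolding Lspace_def by (intro bounded_plus_comp bounded_scaleR_comp) auto
  then show ?thesis
    using assms unfolding Lspace_def by auto
qed

lemma Lspace_shift:
  assumes "Z \<in> Lspace M"
  shows "shift M Z c \<in> Lspace M"
proof -
  have "shift M Z c ` space M = (\<lambda>x. c + x) ` (Z ` space M)"
    unfolding shift_def by (auto simp: image_image add.commute)
  then have "bounded (shift M Z c ` space M)"
    using assms bounded_translation unfolding Lspace_def by auto
  moreover have "shift M Z c \<in> borel_measurable M"
    using assms unfolding Lspace_def shift_def by (auto cong: measurable_cong)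
  ultimately show ?thesis
    unfolding Lspace_def shift_def by auto
qed

lemma shift_0: "Z \<in> Lspace M \<Longrightarrow> shift M Z 0 = Z"
  unfolding Lspace_def shift_def by auto

lemma comonotone_le_of_aggregate_le:
  assumes "comonotone M n Y" "\<omega>1 \<in> space M" "\<omega>2 \<in> space M"
    "aggregate n Y \<omega>2 \<le> aggregate n Y \<omega>1" "i \<in> {1..n}"
  shows "Y i \<omega>2 \<le> Y i \<omega>1"
proof (rule ccontr)
  assume "\<not> ?thesis"
  then have lt: "Y i \<omega>1 < Y i \<omega>2" by simp
  have "Y j \<omega>1 \<le> Y j \<omega>2" if "j \<in> {1..n}" for j
  proof -
    have "0 \<le> (Y i \<omega>1 - Y i \<omega>2) * (Y j \<omega>1 - Y j \<omega>2)"
      using assms that unfolding comonotone_def by blast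
    then show ?thesis using lt by (simp add: zero_le_mult_iff)
  qed
  then have "aggregate n Y \<omega>1 < aggregate n Y \<omega>2"
    using lt assms(5) unfolding aggregate_def by (intro sum_strict_mono_ex1) auto
  then show False using assms(4) by simp
qed

lemma comonotoneI_ordered:
  assumes "\<And>\<omega>1 \<omega>2. \<omega>1 \<in> space M \<Longrightarrow> \<omega>2 \<in> space M \<Longrightarrow>
      aggregate n Y \<omega>2 \<le> aggregate n Y \<omega>1 \<Longrightarrow> \<forall>i\<in>{1..n}. Y i \<omega>2 \<le> Y i \<omega>1"
  shows "comonotone M n Y"
  unfolding comonotone_def
proof (intro ballI)
  fix i j \<omega>1 \<omega>2 assume ij: "i \<in> {1..n}" "j \<in> {1..n}" and \<omega>: "\<omega>1 \<in> space M" "\<omega>2 \<in> space M"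
  show "0 \<le> (Y i \<omega>1 - Y i \<omega>2) * (Y j \<omega>1 - Y j \<omega>2)"
  proof (cases "aggregate n Y \<omega>2 \<le> aggregate n Y \<omega>1")
    case True
    then show ?thesis using assms[OF \<omega>] ij by simp
  next
    case False
    then show ?thesis using assms[OF \<omega>(2,1)] ij by (simp add: mult_nonpos_nonpos)
  qed
qed

definition mix_alloc :: "nat \<Rightarrow> real \<Rightarrow> (nat \<Rightarrow> 'a \<Rightarrow> real) \<Rightarrow> (nat \<Rightarrow> 'a \<Rightarrow> real)
    \<Rightarrow> nat \<Rightarrow> 'a \<Rightarrow> real" where
  "mix_alloc n t Y Z = (\<lambda>i\<in>{1..n}. \<lambda>\<omega>. t * Y i \<omega> + (1 - t) * Z i \<omega>)"

lemma aggregate_mix_alloc: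
  "aggregate n (mix_alloc n t Y Z) \<omega> = t * aggregate n Y \<omega> + (1 - t) * aggregate n Z \<omega>"
  unfolding aggregate_def mix_alloc_def by (simp add: sum.distrib sum_distrib_left)

lemma mix_alloc_allocations:
  assumes "Y \<in> allocations M n X" "Z \<in> allocations M n X"
  shows "mix_alloc n t Y Z \<in> allocations M n X"
proof -
  have "aggregate n (mix_alloc n t Y Z) = aggregate n X"
    using assms unfolding allocations_def by (auto simp: aggregate_mix_alloc algebra_simps)
  then show ?thesis
    using assms unfolding allocations_def mix_alloc_def by (auto intro: Lspace_convex_comb)
qed

lemma mix_alloc_comon_allocations:
  assumes "Y \<in> comon_allocations M n X" "Z \<in> comon_allocations M n X" "0 \<le> t" "t \<le> 1"
  shows "mix_alloc n t Y Z \<in> comon_allocations M n X"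
proof -
  have agg: "aggregate n Y = aggregate n X" "aggregate n Z = aggregate n X"
    and com: "comonotone M n Y" "comonotone M n Z"
    using assms(1,2) unfolding comon_allocations_def allocations_def by auto
  have "comonotone M n (mix_alloc n t Y Z)"
  proof (rule comonotoneI_ordered)
    fix \<omega>1 \<omega>2 assume \<omega>: "\<omega>1 \<in> space M" "\<omega>2 \<in> space M"
      and "aggregate n (mix_alloc n t Y Z) \<omega>2 \<le> aggregate n (mix_alloc n t Y Z) \<omega>1"
    then have "aggregate n X \<omega>2 \<le> aggregate n X \<omega>1"
      by (simp add: aggregate_mix_alloc agg algebra_simps)
    then have "Y i \<omega>2 \<le> Y i \<omega>1" "Z i \<omega>2 \<le> Z i \<omega>1" if "i \<in> {1..n}" for i
      using comonotone_le_of_aggregate_le[OF com(1) \<omega>] comonotone_le_of_aggregate_le[OF com(2) \<omega>]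
        that agg by auto
    then show "\<forall>i\<in>{1..n}. mix_alloc n t Y Z i \<omega>2 \<le> mix_alloc n t Y Z i \<omega>1"
      using assms(3,4) unfolding mix_alloc_def by (auto intro!: add_mono mult_left_mono)
  qed
  then show ?thesis
    using assms mix_alloc_allocations unfolding comon_allocations_def by blast
qed

lemma concave_fun_mix_alloc:
  assumes "concave_fun M (U i)" "i \<in> {1..n}" "Y i \<in> Lspace M" "Z i \<in> Lspace M" "0 \<le> t" "t \<le> 1"
  shows "t * U i (Y i) + (1 - t) * U i (Z i) \<le> U i (mix_alloc n t Y Z i)"
  using assms unfolding concave_fun_def mix_alloc_def by simp

lemma mix_alloc_IR:
  assumes "\<forall>i\<in>{1..n}. concave_fun M (U i)"
    and "Y \<in> IR M n U X" "Z \<in> IR M n U X" "0 \<le> t" "t \<le> 1"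
  shows "mix_alloc n t Y Z \<in> IR M n U X"
proof -
  have "U i (X i) \<le> U i (mix_alloc n t Y Z i)" if i: "i \<in> {1..n}" for i
  proof -
    have "U i (X i) = t * U i (X i) + (1 - t) * U i (X i)" by (simp add: algebra_simps)
    also have "\<dots> \<le> t * U i (Y i) + (1 - t) * U i (Z i)"
      using assms(2-5) i unfolding IR_def by (intro add_mono mult_left_mono) auto
    also have "\<dots> \<le> U i (mix_alloc n t Y Z i)"
      using assms i by (intro concave_fun_mix_alloc) (auto simp: IR_def allocations_def)
    finally show ?thesis .
  qed
  then show ?thesis
    using assms(2,3) mix_alloc_allocations unfolding IR_def by blast
qed

lemma utility_possibilities_convex_upto_disposal:
  assumes "\<forall>i\<in>{1..n}. concave_fun M (U i)"
  shows "convex_upto_disposal {1..n} ((\<lambda>Y i. U i (Y i)) ` (IR M n U X \<inter> comon_allocations M n X))"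
  unfolding convex_upto_disposal_def
proof (intro ballI allI impI)
  fix k1 k2 and t :: real
  assume "k1 \<in> (\<lambda>Y i. U i (Y i)) ` (IR M n U X \<inter> comon_allocations M n X)"
    "k2 \<in> (\<lambda>Y i. U i (Y i)) ` (IR M n U X \<inter> comon_allocations M n X)" and t: "0 \<le> t" "t \<le> 1"
  then obtain Y Z where YZ: "Y \<in> IR M n U X \<inter> comon_allocations M n X"
    "Z \<in> IR M n U X \<inter> comon_allocations M n X" "k1 = (\<lambda>i. U i (Y i))" "k2 = (\<lambda>i. U i (Z i))"
    by blast
  have "mix_alloc n t Y Z \<in> IR M n U X \<inter> comon_allocations M n X"
    using mix_alloc_IR[OF assms _ _ t] mix_alloc_comon_allocations[OF _ _ t] YZ(1,2) by blast
  moreover have "t * k1 i + (1 - t) * k2 i \<le> U i (mix_alloc n t Y Z i)" if "i \<in> {1..n}" for i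
    unfolding YZ(3,4) using YZ(1,2) t assms that
    by (intro concave_fun_mix_alloc) (auto simp: IR_def allocations_def)
  ultimately show "\<exists>k\<in>(\<lambda>Y i. U i (Y i)) ` (IR M n U X \<inter> comon_allocations M n X).
      \<forall>i\<in>{1..n}. t * k1 i + (1 - t) * k2 i \<le> k i"
    by (intro bexI[of _ "\<lambda>i. U i (mix_alloc n t Y Z i)"] ballI imageI)
qed

definition cash_transfer :: "'a measure \<Rightarrow> nat \<Rightarrow> (nat \<Rightarrow> 'a \<Rightarrow> real) \<Rightarrow> nat \<Rightarrow> nat \<Rightarrow> real
    \<Rightarrow> nat \<Rightarrow> 'a \<Rightarrow> real" where
  "cash_transfer M n Y k j e = (\<lambda>i\<in>{1..n}.
      if i = k then shift M (Y k) (- e) else if i = j then shift M (Y j) e else Y i)"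

lemma cash_transfer_apply:
  assumes "i \<in> {1..n}" "\<omega> \<in> space M"
  shows "cash_transfer M n Y k j e i \<omega> = Y i \<omega> + (if i = k then - e else if i = j then e else 0)"
  using assms unfolding cash_transfer_def shift_def by auto

lemma aggregate_cash_transfer:
  assumes "\<forall>i\<in>{1..n}. Y i \<in> Lspace M" "k \<in> {1..n}" "j \<in> {1..n}" "j \<noteq> k"
  shows "aggregate n (cash_transfer M n Y k j e) = aggregate n Y"
proof
  fix \<omega>
  show "aggregate n (cash_transfer M n Y k j e) \<omega> = aggregate n Y \<omega>"
  proof (cases "\<omega> \<in> space M")
    case True
    have "(\<Sum>i=1..n. if i = k then - e else if i = j then e else 0) =
        (\<Sum>i=1..n. if i = k then - e else 0) + (\<Sum>i=1..n. if i = j then e else (0::real))"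
      using \<open>j \<noteq> k\<close> by (subst sum.distrib[symmetric]) (rule sum.cong, auto)
    also have "\<dots> = 0" using assms(2,3) by simp
    finally show ?thesis
      using True unfolding aggregate_def by (simp add: cash_transfer_apply sum.distrib)
  next
    case False
    then have "cash_transfer M n Y k j e i \<omega> = 0" "Y i \<omega> = 0" if "i \<in> {1..n}" for i
      using assms(1) that unfolding cash_transfer_def shift_def Lspace_def by auto
    then show ?thesis
      unfolding aggregate_def by simp
  qed
qed

lemma cash_transfer_comon_allocations:
  assumes "Y \<in> comon_allocations M n X" "k \<in> {1..n}" "j \<in> {1..n}" "j \<noteq> k"
  shows "cash_transfer M n Y k j e \<in> comon_allocations M n X"
proof -
  have Y: "\<forall>i\<in>{1..n}. Y i \<in> Lspace M" "aggregate n Y = aggregate n X" "comonotone M n Y"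
    using assms(1) unfolding comon_allocations_def allocations_def by auto
  have "cash_transfer M n Y k j e \<in> {1..n} \<rightarrow>\<^sub>E Lspace M"
    using Y(1) assms(2,3) unfolding cash_transfer_def by (auto intro!: Lspace_shift)
  moreover have "comonotone M n (cash_transfer M n Y k j e)"
    using Y(3) unfolding comonotone_def by (simp add: cash_transfer_apply)
  ultimately show ?thesis
    using aggregate_cash_transfer[OF Y(1) assms(2-4)] Y(2)
    unfolding comon_allocations_def allocations_def by auto
qed

lemma continuous_gt_left:
  fixes f :: "real \<Rightarrow> real"
  assumes "continuous_on UNIV f" "a < f x"
  shows "\<exists>e>0. a < f (x - e)"
proof -
  have "(f \<longlongrightarrow> f x) (at x)"
    using assms(1) by (simp add: continuous_on_def)
  then have "\<forall>\<^sub>F y in at x. a < f y"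
    using assms(2) by (rule order_tendstoD)
  then obtain d where "0 < d" "\<And>y. y \<noteq> x \<Longrightarrow> dist y x < d \<Longrightarrow> a < f y"
    unfolding eventually_at by blast
  then show ?thesis
    by (intro exI[of _ "d / 2"]) (simp add: dist_real_def)
qed

lemma CS_no_strict_gain:
  assumes "Ys \<in> CS M n U X l" "\<forall>i\<in>{1..n}. 0 \<le> l i"
    and "Y \<in> IR M n U X \<inter> comon_allocations M n X" "\<forall>i\<in>{1..n}. U i (Ys i) \<le> U i (Y i)"
    and "k \<in> {1..n}" "0 < l k"
  shows "U k (Y k) \<le> U k (Ys k)"
proof (rule ccontr)
  assume "\<not> ?thesis"
  then have "(\<Sum>i=1..n. l i * U i (Ys i)) < (\<Sum>i=1..n. l i * U i (Y i))"
    using assms(2,4-6) by (intro sum_strict_mono_ex1) (auto intro: mult_left_mono intro!: bexI[of _ k])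
  then show False
    using assms(1,3) unfolding CS_def by (auto simp: not_le[symmetric])
qed

lemma strict_gain_transferable:
  assumes cont: "\<forall>i\<in>{1..n}. \<forall>Z\<in>Lspace M. continuous_on UNIV (\<lambda>c. U i (shift M Z c))"
    and incr: "\<forall>i\<in>{1..n}. \<forall>Z\<in>Lspace M. strict_mono (\<lambda>c. U i (shift M Z c))"
    and Y: "Y \<in> IR M n U X \<inter> comon_allocations M n X" and Ys: "Ys \<in> IR M n U X"
    and gain: "\<forall>i\<in>{1..n}. U i (Ys i) \<le> U i (Y i)" "U k (Ys k) < U k (Y k)"
    and jk: "k \<in> {1..n}" "j \<in> {1..n}" "j \<noteq> k"
  shows "\<exists>Y'\<in>IR M n U X \<inter> comon_allocations M n X.
      (\<forall>i\<in>{1..n}. U i (Ys i) \<le> U i (Y' i)) \<and> U j (Ys j) < U j (Y' j)"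
proof -
  have YL: "\<forall>i\<in>{1..n}. Y i \<in> Lspace M"
    using Y unfolding IR_def allocations_def by auto
  have "continuous_on UNIV (\<lambda>c. U k (shift M (Y k) c))" "U k (Ys k) < U k (shift M (Y k) 0)"
    using cont gain(2) jk(1) YL shift_0[of "Y k" M] by auto
  then obtain e where "0 < e" and gain_k: "U k (Ys k) < U k (shift M (Y k) (0 - e))"
    by (blast dest: continuous_gt_left)
  define Y' where "Y' = cash_transfer M n Y k j e"
  have Y'_k: "Y' k = shift M (Y k) (- e)" and Y'_j: "Y' j = shift M (Y j) e"
    and Y'_other: "\<And>i. i \<in> {1..n} \<Longrightarrow> i \<noteq> k \<Longrightarrow> i \<noteq> j \<Longrightarrow> Y' i = Y i"
    using jk unfolding Y'_def cash_transfer_def by auto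
  have "U j (shift M (Y j) 0) < U j (shift M (Y j) e)"
    using incr jk(2) YL \<open>0 < e\<close> unfolding strict_mono_def by blast
  then have gain_j: "U j (Ys j) < U j (Y' j)"
    using gain(1) jk(2) YL shift_0 Y'_j by fastforce
  have gains: "\<forall>i\<in>{1..n}. U i (Ys i) \<le> U i (Y' i)"
    using gain(1) gain_k gain_j Y'_k Y'_other by (metis diff_0 less_imp_le)
  have "Y' \<in> comon_allocations M n X"
    using Y jk cash_transfer_comon_allocations unfolding Y'_def by blast
  moreover have "\<forall>i\<in>{1..n}. U i (X i) \<le> U i (Y' i)"
    using Ys gains unfolding IR_def by force
  ultimately have "Y' \<in> IR M n U X \<inter> comon_allocations M n X"
    unfolding IR_def comon_allocations_def by blast
  then show ?thesis
    using gains gain_j by blast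
qed

lemma CS_subset_CPO:
  assumes cont: "\<forall>i\<in>{1..n}. \<forall>Z\<in>Lspace M. continuous_on UNIV (\<lambda>c. U i (shift M Z c))"
    and incr: "\<forall>i\<in>{1..n}. \<forall>Z\<in>Lspace M. strict_mono (\<lambda>c. U i (shift M Z c))"
    and "l \<in> Lambda n"
  shows "CS M n U X l \<subseteq> CPO M n U X"
proof
  fix Ys assume Ys: "Ys \<in> CS M n U X l"
  have l: "\<forall>i\<in>{1..n}. 0 \<le> l i" and "\<exists>j\<in>{1..n}. l j \<noteq> 0"
    using \<open>l \<in> Lambda n\<close> unfolding Lambda_def by auto
  then obtain j where j: "j \<in> {1..n}" "0 < l j"
    by (auto simp: less_le)
  have "U k (Y k) \<le> U k (Ys k)"
    if Y: "Y \<in> IR M n U X \<inter> comon_allocations M n X" "\<forall>i\<in>{1..n}. U i (Ys i) \<le> U i (Y i)"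
      and k: "k \<in> {1..n}" for Y k
  proof (rule ccontr)
    assume "\<not> ?thesis"
    then have gain_k: "U k (Ys k) < U k (Y k)" by simp
    then have "\<not> 0 < l k"
      using CS_no_strict_gain[OF Ys l Y k] by (meson not_le)
    then have "j \<noteq> k" using j by auto
    moreover have "Ys \<in> IR M n U X" using Ys unfolding CS_def by blast
    ultimately obtain Y' where "Y' \<in> IR M n U X \<inter> comon_allocations M n X"
      "\<forall>i\<in>{1..n}. U i (Ys i) \<le> U i (Y' i)" "U j (Ys j) < U j (Y' j)"
      using strict_gain_transferable[OF cont incr Y(1)] Y(2) gain_k k j(1) by blast
    then show False
      using CS_no_strict_gain[OF Ys l] j by fastforce
  qed
  then show "Ys \<in> CPO M n U X"
    using Ys unfolding CS_def CPO_def by (auto simp: not_less[symmetric])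
qed

lemma CPO_subset_CS:
  assumes "1 \<le> n" "\<forall>i\<in>{1..n}. concave_fun M (U i)"
  shows "CPO M n U X \<subseteq> (\<Union>l\<in>Lambda n. CS M n U X l)"
proof
  fix Ys assume Ys: "Ys \<in> CPO M n U X"
  define F where "F = IR M n U X \<inter> comon_allocations M n X"
  have "\<exists>i\<in>{1..n}. U i (Y i) \<le> U i (Ys i)" if "Y \<in> F" for Y
  proof (rule ccontr)
    assume "\<not> ?thesis"
    then have "\<forall>i\<in>{1..n}. U i (Ys i) < U i (Y i)" by auto
    then have "\<forall>i\<in>{1..n}. U i (Ys i) \<le> U i (Y i)" "\<exists>i\<in>{1..n}. U i (Ys i) < U i (Y i)"
      using \<open>1 \<le> n\<close> by auto
    then show False
      using Ys that unfolding CPO_def F_def by blast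
  qed
  then obtain l where l: "\<forall>i\<in>{1..n}. 0 \<le> l i" "sum l {1..n} = 1"
    and supp: "\<forall>Y\<in>F. (\<Sum>i=1..n. l i * U i (Y i)) \<le> (\<Sum>i=1..n. l i * U i (Ys i))"
    using convex_upto_disposal_supporting_weights[of "{1..n}" "(\<lambda>Y i. U i (Y i)) ` F" "\<lambda>i. U i (Ys i)"]
      utility_possibilities_convex_upto_disposal[OF assms(2)] \<open>1 \<le> n\<close>
    unfolding F_def by auto
  have "restrict l {1..n} \<in> Lambda n"
    using l unfolding Lambda_def by (force intro: ccontr)
  moreover have "Ys \<in> CS M n U X (restrict l {1..n})"
    using Ys supp unfolding CPO_def CS_def F_def by auto
  ultimately show "Ys \<in> (\<Union>l\<in>Lambda n. CS M n U X l)"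
    by blast
qed

theorem mainTheorem3:
  fixes M :: "'a measure" and n :: nat
    and U :: "nat \<Rightarrow> ('a \<Rightarrow> real) \<Rightarrow> real"
    and X :: "nat \<Rightarrow> 'a \<Rightarrow> real"
  assumes "prob_space M" and "atomless M" and "n \<ge> 2"
    and "\<forall>i\<in>{1..n}. X i \<in> Lspace M"
    and "\<forall>i\<in>{1..n}. ae_invariant M (U i)"
    and "\<forall>i\<in>{1..n}. \<forall>Z\<in>Lspace M. continuous_on UNIV (\<lambda>c. U i (shift M Z c))"
    and "\<forall>i\<in>{1..n}. \<forall>Z\<in>Lspace M. strict_mono (\<lambda>c. U i (shift M Z c))"
    and "\<forall>i\<in>{1..n}. \<forall>Z\<in>Lspace M. filterlim (\<lambda>c. U i (shift M Z c)) at_top at_top"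
    and "\<forall>i\<in>{1..n}. monotone_fun M (U i)"
    and "\<forall>i\<in>{1..n}. concave_fun M (U i)"
  shows "CPO M n U X = (\<Union>l\<in>Lambda n. CS M n U X l)"
proof
  show "CPO M n U X \<subseteq> (\<Union>l\<in>Lambda n. CS M n U X l)"
    using CPO_subset_CS[OF _ assms(10)] \<open>n \<ge> 2\<close> by simp
  show "(\<Union>l\<in>Lambda n. CS M n U X l) \<subseteq> CPO M n U X"
    using CS_subset_CPO[OF assms(6,7)] by blast
qed

end
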